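(* Let $A$ be a basic connected finite dimensional algebra over an algebraically closed field $k$ with ordinary quiver $Q$ without oriented cycles. Let $f\in\mathsf{HH}^1(A)$ be diagonal with respect to a basis $\mathcal B$ of $A$, and let $\nu\colon kQ\twoheadrightarrow A$ be a presentation adapted to $\mathcal B$, i.e. $\nu(\alpha)\in\mathcal B$ for every arrow $\alpha$ of $Q$. Then $f\in\mathsf{Im}(\theta_\nu)$.
   Context: Fix a complete set $e_1,\dots,e_n$ of primitive orthogonal idempotents of $A$ indexed by $Q_0=\{1,\dots,n\}$, $E=\bigoplus ke_i$, $\mathfrak r$ the radical. A presentation is a surjective algebra map $\nu\colon kQ\twoheadrightarrow A$ with admissible kernel ($(kQ^+)^N\subseteq\mathsf{Ker}\,\nu\subseteq(kQ^+)^2$ for some $N\ge2$, $kQ^+$ the arrow ideal) and $\nu(e_i)=e_i$. $\mathsf{HH}^1(A)=Der_0(A)/Int_0(A)$, with $Der_0(A)$ the derivations vanishing on all $e_i$ (commutator bracket) and $Int_0(A)=\{a\mapsto ea-ae\mid e\in E\}$. A basis of $A$ is a $k$-basis $\mathcal B\subseteq\bigcup_{i,j}e_jAe_i$ containing $e_1,\dots,e_n$ with its other elements in $\mathfrak r$; $f\in\mathsf{HH}^1(A)$ is diagonal with respect to $\mathcal B$ if a derivation representing $f$ is diagonal in $\mathcal B$. Walks: paths in $Q$ with formal inverse arrows allowed. For $I=\mathsf{Ker}\,\nu$, the homotopy relation $\sim_I$ is the smallest equivalence relation on walks with $\alpha\alpha^{-1}\sim_I e_y$, $\alpha^{-1}\alpha\sim_I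 e_x$ for arrows $\alpha\colon x\to y$, compatible with concatenation, and identifying two paths occurring with nonzero coefficient in a same minimal relation of $I$ (a nonzero $\sum t_iu_i\in I$, $t_i\neq0$, distinct paths, no nonempty proper subsum in $I$). $\pi_1(Q,I)$ is the group of classes of closed walks at a fixed vertex $x_0$. Fix a maximal tree $T$ of $Q$, $\gamma_x$ the minimal walk in $T$ from $x_0$ to $x$. For a group homomorphism $g\colon\pi_1(Q,I)\to k^+$, $\theta_\nu(g)$ is the class of the derivation $\tilde g$ with $\tilde g(\nu(u))=g([\gamma_y^{-1}u\gamma_x]_I)\nu(u)$ for paths $u$ from $x$ to $y$. *)

theory Defs
  imports "HOL-Algebra.Group" "HOL-Computational_Algebra.Polynomial"
begin

definition alg_closed_field :: "'k::field itself \<Rightarrow> bool" where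
  "alg_closed_field _ \<longleftrightarrow> (\<forall>p :: 'k poly. 0 < degree p \<longrightarrow> (\<exists>x. poly p x = 0))"

definition k_algebra :: "('k::field \<Rightarrow> 'a::ring_1 \<Rightarrow> 'a) \<Rightarrow> bool" where
  "k_algebra scale \<longleftrightarrow> vector_space scale \<and>
     (\<forall>c a b. scale c (a * b) = scale c a * b \<and> scale c (a * b) = a * scale c b)"

definition finite_dim_algebra :: "('k::field \<Rightarrow> 'a::ring_1 \<Rightarrow> 'a) \<Rightarrow> bool" where
  "finite_dim_algebra scale \<longleftrightarrow> k_algebra scale \<and>
     (\<exists>S. finite S \<and> module.span scale S = UNIV)"

definition connected_algebra :: "'a::ring_1 itself \<Rightarrow> bool" where
  "connected_algebra _ \<longleftrightarrow> (1::'a) \<noteq> 0 \<and>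
     (\<forall>c::'a. c * c = c \<and> (\<forall>a. c * a = a * c) \<longrightarrow> c = 0 \<or> c = 1)"

definition jrad :: "'a::ring_1 set" where
  "jrad = {a. \<forall>b. \<exists>c. c * (1 - b * a) = 1}"

definition primitive_idem :: "'a::ring_1 \<Rightarrow> bool" where
  "primitive_idem x \<longleftrightarrow> x \<noteq> 0 \<and> x * x = x \<and>
     (\<forall>p q. p * p = p \<and> q * q = q \<and> p * q = 0 \<and> q * p = 0 \<and> p + q = x \<longrightarrow> p = 0 \<or> q = 0)"

definition complete_prim_orth_idems :: "'v set \<Rightarrow> ('v \<Rightarrow> 'a::ring_1) \<Rightarrow> bool" where
  "complete_prim_orth_idems V e \<longleftrightarrow> finite V \<and> (\<forall>i\<in>V. primitive_idem (e i)) \<and>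
     (\<forall>i\<in>V. \<forall>j\<in>V. i \<noteq> j \<longrightarrow> e i * e j = 0) \<and> (\<Sum>i\<in>V. e i) = 1"

text \<open>A step of a walk is (arrow, True) (traversed forwards) or (arrow, False) (formal inverse).
  Walks are written in traversal order: (x, [s1, ..., sm]) starts at x and traverses s1 first.\<close>

definition sstart :: "('e \<Rightarrow> 'v) \<Rightarrow> ('e \<Rightarrow> 'v) \<Rightarrow> 'e \<times> bool \<Rightarrow> 'v" where
  "sstart src tgt s = (if snd s then src (fst s) else tgt (fst s))"

definition send :: "('e \<Rightarrow> 'v) \<Rightarrow> ('e \<Rightarrow> 'v) \<Rightarrow> 'e \<times> bool \<Rightarrow> 'v" where
  "send src tgt s = (if snd s then tgt (fst s) else src (fst s))"

fun steps_ok :: "('e \<Rightarrow> 'v) \<Rightarrow> ('e \<Rightarrow> 'v) \<Rightarrow> 'e set \<Rightarrow> 'v \<Rightarrow> ('e \<times> bool) list \<Rightarrow> bool" where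
  "steps_ok src tgt E x [] = True"
| "steps_ok src tgt E x (s # ss) =
     (fst s \<in> E \<and> sstart src tgt s = x \<and> steps_ok src tgt E (send src tgt s) ss)"

fun wend :: "('e \<Rightarrow> 'v) \<Rightarrow> ('e \<Rightarrow> 'v) \<Rightarrow> 'v \<Rightarrow> ('e \<times> bool) list \<Rightarrow> 'v" where
  "wend src tgt x [] = x"
| "wend src tgt x (s # ss) = wend src tgt (send src tgt s) ss"

definition walk :: "'v set \<Rightarrow> 'e set \<Rightarrow> ('e \<Rightarrow> 'v) \<Rightarrow> ('e \<Rightarrow> 'v) \<Rightarrow> 'v \<times> ('e \<times> bool) list \<Rightarrow> bool" where
  "walk V E src tgt w \<longleftrightarrow> fst w \<in> V \<and> steps_ok src tgt E (fst w) (snd w)"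

definition inv_steps :: "('e \<times> bool) list \<Rightarrow> ('e \<times> bool) list" where
  "inv_steps ss = rev (map (\<lambda>s. (fst s, \<not> snd s)) ss)"

text \<open>Paths (x, [a1,...,am]): start at x, a1 first. Trivial path (x, []) is e_x.\<close>
definition path_walk :: "'v \<times> 'e list \<Rightarrow> 'v \<times> ('e \<times> bool) list" where
  "path_walk u = (fst u, map (\<lambda>a. (a, True)) (snd u))"

definition is_path :: "'v set \<Rightarrow> 'e set \<Rightarrow> ('e \<Rightarrow> 'v) \<Rightarrow> ('e \<Rightarrow> 'v) \<Rightarrow> 'v \<times> 'e list \<Rightarrow> bool" where
  "is_path V E src tgt u \<longleftrightarrow> walk V E src tgt (path_walk u)"

definition no_oriented_cycles :: "'v set \<Rightarrow> 'e set \<Rightarrow> ('e \<Rightarrow> 'v) \<Rightarrow> ('e \<Rightarrow> 'v) \<Rightarrow> bool" where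
  "no_oriented_cycles V E src tgt \<longleftrightarrow>
     (\<forall>u. is_path V E src tgt u \<and> snd u \<noteq> [] \<longrightarrow>
        wend src tgt (fst u) (snd (path_walk u)) \<noteq> fst u)"

definition quiver :: "'v set \<Rightarrow> 'e set \<Rightarrow> ('e \<Rightarrow> 'v) \<Rightarrow> ('e \<Rightarrow> 'v) \<Rightarrow> bool" where
  "quiver V E src tgt \<longleftrightarrow> finite V \<and> finite E \<and> (\<forall>a\<in>E. src a \<in> V \<and> tgt a \<in> V)"

text \<open>An element of kQ is a finitely supported k-valued function on the paths of Q.
  An algebra map \<nu> : kQ \<rightarrow> A with \<nu>(e_i) = e_i is (by the universal property of kQ)
  the same as a choice of \<nu>(\<alpha>) \<in> e_t(\<alpha>) A e_s(\<alpha>) for every arrow \<alpha>; here nuA gives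
  these images and nu_path, nu_lin its extension to paths and to kQ.
  The path a1 ... am (a1 first) maps to \<nu>(am) \<dots> \<nu>(a1) e_x.\<close>

definition nu_path :: "('v \<Rightarrow> 'a::ring_1) \<Rightarrow> ('e \<Rightarrow> 'a) \<Rightarrow> 'v \<times> 'e list \<Rightarrow> 'a" where
  "nu_path e nuA u = foldl (\<lambda>acc a. nuA a * acc) (e (fst u)) (snd u)"

definition kQ_elem :: "'v set \<Rightarrow> 'e set \<Rightarrow> ('e \<Rightarrow> 'v) \<Rightarrow> ('e \<Rightarrow> 'v) \<Rightarrow> ('v \<times> 'e list \<Rightarrow> 'k::field) \<Rightarrow> bool" where
  "kQ_elem V E src tgt \<rho> \<longleftrightarrow> finite {u. \<rho> u \<noteq> 0} \<and> (\<forall>u. \<rho> u \<noteq> 0 \<longrightarrow> is_path V E src tgt u)"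

definition nu_lin :: "('k::field \<Rightarrow> 'a::ring_1 \<Rightarrow> 'a) \<Rightarrow> ('v \<Rightarrow> 'a) \<Rightarrow> ('e \<Rightarrow> 'a) \<Rightarrow> ('v \<times> 'e list \<Rightarrow> 'k) \<Rightarrow> 'a" where
  "nu_lin scale e nuA \<rho> = (\<Sum>u\<in>{u. \<rho> u \<noteq> 0}. scale (\<rho> u) (nu_path e nuA u))"

definition in_ker :: "'v set \<Rightarrow> 'e set \<Rightarrow> ('e \<Rightarrow> 'v) \<Rightarrow> ('e \<Rightarrow> 'v) \<Rightarrow> ('k::field \<Rightarrow> 'a::ring_1 \<Rightarrow> 'a) \<Rightarrow> ('v \<Rightarrow> 'a) \<Rightarrow> ('e \<Rightarrow> 'a) \<Rightarrow> ('v \<times> 'e list \<Rightarrow> 'k) \<Rightarrow> bool" where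
  "in_ker V E src tgt scale e nuA \<rho> \<longleftrightarrow> kQ_elem V E src tgt \<rho> \<and> nu_lin scale e nuA \<rho> = 0"

text \<open>Presentation: \<nu> is an algebra map kQ \<rightarrow> A with \<nu>(e_i) = e_i, surjective, with admissible
  kernel: (kQ^+)^N \<subseteq> Ker \<nu> (i.e. all paths of length \<ge> N, which span (kQ^+)^N, are killed)
  and Ker \<nu> \<subseteq> (kQ^+)^2 (i.e. elements of the kernel have no component on paths of length < 2).\<close>
definition presentation :: "'v set \<Rightarrow> 'e set \<Rightarrow> ('e \<Rightarrow> 'v) \<Rightarrow> ('e \<Rightarrow> 'v) \<Rightarrow> ('k::field \<Rightarrow> 'a::ring_1 \<Rightarrow> 'a) \<Rightarrow> ('v \<Rightarrow> 'a) \<Rightarrow> ('e \<Rightarrow> 'a) \<Rightarrow> bool" where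
  "presentation V E src tgt scale e nuA \<longleftrightarrow>
     (\<forall>a\<in>E. e (tgt a) * nuA a * e (src a) = nuA a) \<and>
     module.span scale (nu_path e nuA ` {u. is_path V E src tgt u}) = UNIV \<and>
     (\<exists>N\<ge>2. \<forall>u. is_path V E src tgt u \<and> length (snd u) \<ge> N \<longrightarrow> nu_path e nuA u = 0) \<and>
     (\<forall>\<rho>. in_ker V E src tgt scale e nuA \<rho> \<longrightarrow> (\<forall>u. length (snd u) < 2 \<longrightarrow> \<rho> u = 0))"

definition minimal_rel :: "'v set \<Rightarrow> 'e set \<Rightarrow> ('e \<Rightarrow> 'v) \<Rightarrow> ('e \<Rightarrow> 'v) \<Rightarrow> ('k::field \<Rightarrow> 'a::ring_1 \<Rightarrow> 'a) \<Rightarrow> ('v \<Rightarrow> 'a) \<Rightarrow> ('e \<Rightarrow> 'a) \<Rightarrow> ('v \<times> 'e list \<Rightarrow> 'k) \<Rightarrow> bool" where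
  "minimal_rel V E src tgt scale e nuA \<rho> \<longleftrightarrow>
     in_ker V E src tgt scale e nuA \<rho> \<and> (\<exists>u. \<rho> u \<noteq> 0) \<and>
     (\<forall>S. S \<noteq> {} \<and> S \<subset> {u. \<rho> u \<noteq> 0} \<longrightarrow>
        \<not> in_ker V E src tgt scale e nuA (\<lambda>u. if u \<in> S then \<rho> u else 0))"

inductive htpy :: "'v set \<Rightarrow> 'e set \<Rightarrow> ('e \<Rightarrow> 'v) \<Rightarrow> ('e \<Rightarrow> 'v) \<Rightarrow> ('k::field \<Rightarrow> 'a::ring_1 \<Rightarrow> 'a) \<Rightarrow> ('v \<Rightarrow> 'a) \<Rightarrow> ('e \<Rightarrow> 'a)
    \<Rightarrow> 'v \<times> ('e \<times> bool) list \<Rightarrow> 'v \<times> ('e \<times> bool) list \<Rightarrow> bool"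
  for V E src tgt scale e nuA where
  refl: "walk V E src tgt w \<Longrightarrow> htpy V E src tgt scale e nuA w w"
| sym: "htpy V E src tgt scale e nuA w w' \<Longrightarrow> htpy V E src tgt scale e nuA w' w"
| trans: "htpy V E src tgt scale e nuA w w' \<Longrightarrow> htpy V E src tgt scale e nuA w' w''
          \<Longrightarrow> htpy V E src tgt scale e nuA w w''"
| cancel_fwd: "a \<in> E \<Longrightarrow> htpy V E src tgt scale e nuA (src a, [(a, True), (a, False)]) (src a, [])"
| cancel_bwd: "a \<in> E \<Longrightarrow> htpy V E src tgt scale e nuA (tgt a, [(a, False), (a, True)]) (tgt a, [])"
| concat: "htpy V E src tgt scale e nuA (x, s1) (x, s1') \<Longrightarrow> htpy V E src tgt scale e nuA (y, s2) (y, s2')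
          \<Longrightarrow> wend src tgt x s1 = y \<Longrightarrow> wend src tgt x s1' = y
          \<Longrightarrow> htpy V E src tgt scale e nuA (x, s1 @ s2) (x, s1' @ s2')"
| minrel: "minimal_rel V E src tgt scale e nuA \<rho> \<Longrightarrow> \<rho> u \<noteq> 0 \<Longrightarrow> \<rho> u' \<noteq> 0
          \<Longrightarrow> htpy V E src tgt scale e nuA (path_walk u) (path_walk u')"

definition htpy_class where
  "htpy_class V E src tgt scale e nuA w = {w'. htpy V E src tgt scale e nuA w w'}"

definition pi1_carrier where
  "pi1_carrier V E src tgt scale e nuA x0 = {htpy_class V E src tgt scale e nuA (x0, ss) | ss.
                  walk V E src tgt (x0, ss) \<and> wend src tgt x0 ss = x0}"

definition pi1_mult where
  "pi1_mult V E src tgt scale e nuA x0 X Y = {w. \<exists>s1 s2. (x0, s1) \<in> X \<and> (x0, s2) \<in> Y \<and>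
                          htpy V E src tgt scale e nuA (x0, s1 @ s2) w}"

definition pi1 :: "'v set \<Rightarrow> 'e set \<Rightarrow> ('e \<Rightarrow> 'v) \<Rightarrow> ('e \<Rightarrow> 'v) \<Rightarrow> ('k::field \<Rightarrow> 'a::ring_1 \<Rightarrow> 'a) \<Rightarrow> ('v \<Rightarrow> 'a) \<Rightarrow> ('e \<Rightarrow> 'a)
    \<Rightarrow> 'v \<Rightarrow> ('v \<times> ('e \<times> bool) list) set monoid" where
  "pi1 V E src tgt scale e nuA x0 =
    \<lparr> carrier = pi1_carrier V E src tgt scale e nuA x0,
      monoid.mult = pi1_mult V E src tgt scale e nuA x0,
      one = htpy_class V E src tgt scale e nuA (x0, []) \<rparr>"

definition additive_group :: "'k::field itself \<Rightarrow> 'k monoid" where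
  "additive_group _ = \<lparr> carrier = UNIV, monoid.mult = (+), one = 0 \<rparr>"

definition reduced_steps :: "('e \<times> bool) list \<Rightarrow> bool" where
  "reduced_steps ss \<longleftrightarrow> (\<forall>i. Suc i < length ss \<longrightarrow>
      \<not> (fst (ss ! i) = fst (ss ! Suc i) \<and> snd (ss ! i) \<noteq> snd (ss ! Suc i)))"

definition maximal_tree :: "'v set \<Rightarrow> 'e set \<Rightarrow> ('e \<Rightarrow> 'v) \<Rightarrow> ('e \<Rightarrow> 'v) \<Rightarrow> 'e set \<Rightarrow> bool" where
  "maximal_tree V E src tgt T \<longleftrightarrow> T \<subseteq> E \<and>
     (\<forall>x\<in>V. \<forall>y\<in>V. \<exists>ss. steps_ok src tgt T x ss \<and> wend src tgt x ss = y) \<and>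
     (\<forall>x\<in>V. \<forall>ss. steps_ok src tgt T x ss \<and> wend src tgt x ss = x \<and> ss \<noteq> [] \<longrightarrow> \<not> reduced_steps ss)"

definition gamma :: "('e \<Rightarrow> 'v) \<Rightarrow> ('e \<Rightarrow> 'v) \<Rightarrow> 'e set \<Rightarrow> 'v \<Rightarrow> 'v \<Rightarrow> ('e \<times> bool) list" where
  "gamma src tgt T x0 x = (SOME ss. steps_ok src tgt T x0 ss \<and> wend src tgt x0 ss = x \<and>
       (\<forall>ss'. steps_ok src tgt T x0 ss' \<and> wend src tgt x0 ss' = x \<longrightarrow> length ss \<le> length ss'))"

text \<open>The closed walk \<gamma>_y^{-1} u \<gamma>_x (traversal order: \<gamma>_x, then u, then \<gamma>_y^{-1}).\<close>
definition loop_of_path where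
  "loop_of_path src tgt T x0 u =
     (x0, gamma src tgt T x0 (fst u) @ snd (path_walk u) @
          inv_steps (gamma src tgt T x0 (wend src tgt (fst u) (snd (path_walk u)))))"

definition Der0 :: "('k::field \<Rightarrow> 'a::ring_1 \<Rightarrow> 'a) \<Rightarrow> 'v set \<Rightarrow> ('v \<Rightarrow> 'a) \<Rightarrow> ('a \<Rightarrow> 'a) \<Rightarrow> bool" where
  "Der0 scale V e D \<longleftrightarrow> Vector_Spaces.linear scale scale D \<and> (\<forall>a b. D (a * b) = D a * b + a * D b) \<and>
     (\<forall>i\<in>V. D (e i) = 0)"

text \<open>D and D' define the same class in HH^1(A) = Der_0(A)/Int_0(A).\<close>
definition same_HH1_class :: "('k::field \<Rightarrow> 'a::ring_1 \<Rightarrow> 'a) \<Rightarrow> 'v set \<Rightarrow> ('v \<Rightarrow> 'a) \<Rightarrow> ('a \<Rightarrow> 'a) \<Rightarrow> ('a \<Rightarrow> 'a) \<Rightarrow> bool" where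
  "same_HH1_class scale V e D D' \<longleftrightarrow>
     (\<exists>c :: 'v \<Rightarrow> 'k. \<forall>a. D a - D' a =
        (\<Sum>i\<in>V. scale (c i) (e i)) * a - a * (\<Sum>i\<in>V. scale (c i) (e i)))"

definition paper_basis :: "('k::field \<Rightarrow> 'a::ring_1 \<Rightarrow> 'a) \<Rightarrow> 'v set \<Rightarrow> ('v \<Rightarrow> 'a) \<Rightarrow> 'a set \<Rightarrow> bool" where
  "paper_basis scale V e B \<longleftrightarrow>
     \<not> module.dependent scale B \<and> module.span scale B = UNIV \<and>
     (\<forall>b\<in>B. \<exists>i\<in>V. \<exists>j\<in>V. b = e j * b * e i) \<and>
     e ` V \<subseteq> B \<and> B - e ` V \<subseteq> jrad"

definition diagonal_wrt :: "('k::field \<Rightarrow> 'a::ring_1 \<Rightarrow> 'a) \<Rightarrow> 'a set \<Rightarrow> ('a \<Rightarrow> 'a) \<Rightarrow> bool" where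
  "diagonal_wrt scale B D \<longleftrightarrow> (\<forall>b\<in>B. \<exists>c. D b = scale c b)"

text \<open>f (the class of D) lies in the image of \<theta>_\<nu>: there is a group homomorphism
  g : \<pi>_1(Q,I) \<rightarrow> k^+ whose associated derivation g~ has the class of D.\<close>
definition in_image_theta :: "'v set \<Rightarrow> 'e set \<Rightarrow> ('e \<Rightarrow> 'v) \<Rightarrow> ('e \<Rightarrow> 'v) \<Rightarrow> ('k::field \<Rightarrow> 'a::ring_1 \<Rightarrow> 'a) \<Rightarrow> ('v \<Rightarrow> 'a) \<Rightarrow> ('e \<Rightarrow> 'a)
    \<Rightarrow> 'e set \<Rightarrow> 'v \<Rightarrow> ('a \<Rightarrow> 'a) \<Rightarrow> bool" where
  "in_image_theta V E src tgt scale e nuA T x0 D \<longleftrightarrow>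
     (\<exists>g \<in> hom (pi1 V E src tgt scale e nuA x0) (additive_group TYPE('k)).
      \<exists>D'. Der0 scale V e D' \<and>
        (\<forall>u. is_path V E src tgt u \<longrightarrow>
           D' (nu_path e nuA u) =
             scale (g (htpy_class V E src tgt scale e nuA (loop_of_path src tgt T x0 u))) (nu_path e nuA u)) \<and>
        same_HH1_class scale V e D D')"

end

theory Submission
  imports Defs
begin

(* Since D is diagonal on the images of the arrows, D(nu alpha) = c_alpha nu alpha, and by the
   Leibniz rule every path u is an eigenvector: D(nu u) = w(u) nu u, where the weight w is the
   additive extension of c to walks (inverse arrows counting negatively). Eigenvectors of distinct
   eigenvalues are independent, so the component of a relation on paths of one weight is again a
   relation; hence all paths of a minimal relation have the same weight. The weight is therefore a
   homotopy invariant and descends to a homomorphism g from pi_1(Q, I) to k^+. Finally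
   D - theta_nu(g) is the inner derivation of z = sum_x w(gamma_x) e_x, because
   g[gamma_y^-1 u gamma_x] = w(gamma_x) + w(u) - w(gamma_y). *)

lemma sum_eigencomponent_eq_0:
  fixes scale :: "'k::field \<Rightarrow> 'a::ab_group_add \<Rightarrow> 'a"
  assumes vs: "vector_space scale" and lin: "Vector_Spaces.linear scale scale D"
  shows "finite F \<Longrightarrow> (\<And>p. p \<in> F \<Longrightarrow> D (v p) = scale (lam p) (v p)) \<Longrightarrow> sum v F = 0
     \<Longrightarrow> sum v {p\<in>F. lam p = \<mu>} = 0"
proof (induction "card (lam ` F)" arbitrary: F v rule: less_induct)
  case (less F v)
  interpret vector_space scale by (rule vs)
  interpret L: module_hom scale scale D using lin by (simp add: module_hom_iff_linear)
  show ?case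
  proof (cases "lam ` F \<subseteq> {\<mu>}")
    case True
    then have "{p\<in>F. lam p = \<mu>} = F" by auto
    then show ?thesis using less by simp
  next
    case False
    then obtain q where q: "q \<in> F" "lam q \<noteq> \<mu>" by auto
    \<comment> \<open>Applying D - lam q kills the eigenvalue lam q and rescales the mu-component by mu - lam q.\<close>
    define v' where "v' p = scale (lam p - lam q) (v p)" for p
    define F' where "F' = {p\<in>F. lam p \<noteq> lam q}"
    have fin: "finite F'" using less(2) by (simp add: F'_def)
    have "lam ` F' \<subseteq> lam ` F - {lam q}" by (auto simp: F'_def)
    then have card_less: "card (lam ` F') < card (lam ` F)"
      using less(2) q(1) by (metis card_Diff1_less card_mono finite_Diff finite_imageI
          image_eqI le_less_trans)
    have eigen: "D (v' p) = scale (lam p) (v' p)" if "p \<in> F'" for p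
      using less(3) that by (auto simp: v'_def F'_def L.scale scale_left_commute)
    have "sum v' F' = sum v' F"
      by (rule sum.mono_neutral_left) (auto simp: F'_def v'_def less(2))
    also have "\<dots> = (\<Sum>p\<in>F. D (v p) - scale (lam q) (v p))"
      using less(3) by (intro sum.cong) (auto simp: v'_def scale_left_diff_distrib)
    also have "\<dots> = D (sum v F) - scale (lam q) (sum v F)"
      by (simp add: L.sum sum_subtractf scale_sum_right)
    finally have "sum v' F' = 0" using less(4) by simp
    from less(1)[OF card_less fin eigen this]
    have "sum v' {p\<in>F'. lam p = \<mu>} = 0" .
    moreover have "{p\<in>F'. lam p = \<mu>} = {p\<in>F. lam p = \<mu>}"
      using q by (auto simp: F'_def)
    moreover have "sum v' {p\<in>F. lam p = \<mu>} = scale (\<mu> - lam q) (sum v {p\<in>F. lam p = \<mu>})"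
      by (simp add: v'_def scale_sum_right)
    ultimately show ?thesis using q(2) by simp
  qed
qed

lemma steps_ok_append [simp]:
  "steps_ok src tgt E x (s1 @ s2) \<longleftrightarrow>
     steps_ok src tgt E x s1 \<and> steps_ok src tgt E (wend src tgt x s1) s2"
  by (induction s1 arbitrary: x) auto

lemma wend_append [simp]: "wend src tgt x (s1 @ s2) = wend src tgt (wend src tgt x s1) s2"
  by (induction s1 arbitrary: x) auto

lemma steps_ok_mono: "T \<subseteq> E \<Longrightarrow> steps_ok src tgt T x ss \<Longrightarrow> steps_ok src tgt E x ss"
  by (induction ss arbitrary: x) auto

lemma inv_steps_Nil [simp]: "inv_steps [] = []"
  by (simp add: inv_steps_def)

lemma inv_steps_Cons [simp]: "inv_steps (s # ss) = inv_steps ss @ [(fst s, \<not> snd s)]"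
  by (simp add: inv_steps_def)

lemma steps_ok_inv_steps:
  "steps_ok src tgt E x ss \<Longrightarrow> steps_ok src tgt E (wend src tgt x ss) (inv_steps ss) \<and>
     wend src tgt (wend src tgt x ss) (inv_steps ss) = x"
  by (induction ss arbitrary: x) (auto simp: sstart_def send_def)

lemma wend_in_vertices:
  "quiver V E src tgt \<Longrightarrow> x \<in> V \<Longrightarrow> steps_ok src tgt E x ss \<Longrightarrow> wend src tgt x ss \<in> V"
  by (induction ss arbitrary: x) (auto simp: quiver_def send_def)

lemma steps_ok_path_arrows: "steps_ok src tgt E x (map (\<lambda>a. (a, True)) as) \<Longrightarrow> set as \<subseteq> E"
  by (induction as arbitrary: x) auto

lemma is_path_vertex_arrows: "is_path V E src tgt u \<Longrightarrow> fst u \<in> V \<and> set (snd u) \<subseteq> E"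
  by (auto simp: is_path_def walk_def path_walk_def dest: steps_ok_path_arrows)

lemma nu_path_Nil [simp]: "nu_path e nuA (x, []) = e x"
  by (simp add: nu_path_def)

lemma nu_path_snoc: "nu_path e nuA (x, as @ [a]) = nuA a * nu_path e nuA (x, as)"
  by (simp add: nu_path_def)

lemma gamma_walk:
  assumes "maximal_tree V E src tgt T" and "x0 \<in> V" and "x \<in> V"
  shows "steps_ok src tgt E x0 (gamma src tgt T x0 x)" and "wend src tgt x0 (gamma src tgt T x0 x) = x"
proof -
  let ?P' = "\<lambda>x y ss. steps_ok src tgt T x ss \<and> wend src tgt x ss = y"
  let ?P = "?P' x0 x"
  have "T \<subseteq> E" and connected: "\<forall>x\<in>V. \<forall>y\<in>V. \<exists>ss. ?P' x y ss"
    using assms(1) by (simp_all add: maximal_tree_def)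
  obtain ss where "?P ss"
    using connected assms(2,3) by blast
  then have "\<exists>ss. ?P ss \<and> (\<forall>ss'. ?P ss' \<longrightarrow> length ss \<le> length ss')"
    by (rule ex_has_least_nat[where m = length])
  then have "\<exists>ss. steps_ok src tgt T x0 ss \<and> wend src tgt x0 ss = x \<and>
      (\<forall>ss'. ?P ss' \<longrightarrow> length ss \<le> length ss')"
    by blast
  from someI_ex[OF this] have "?P (gamma src tgt T x0 x)"
    unfolding gamma_def by (elim conjE) (intro conjI)
  then show "steps_ok src tgt E x0 (gamma src tgt T x0 x)" and "wend src tgt x0 (gamma src tgt T x0 x) = x"
    using steps_ok_mono[OF \<open>T \<subseteq> E\<close>] by auto
qed

lemma walk_loop_of_path:
  assumes "quiver V E src tgt" and "maximal_tree V E src tgt T" and "x0 \<in> V"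
    and "is_path V E src tgt u"
  shows "walk V E src tgt (loop_of_path src tgt T x0 u)"
proof -
  let ?x = "fst u" and ?y = "wend src tgt (fst u) (snd (path_walk u))"
  have x: "?x \<in> V" and u: "steps_ok src tgt E ?x (snd (path_walk u))"
    using assms(4) by (auto simp: is_path_def walk_def path_walk_def)
  have y: "?y \<in> V" using wend_in_vertices[OF assms(1) x u] .
  have "steps_ok src tgt E ?y (inv_steps (gamma src tgt T x0 ?y))"
    using steps_ok_inv_steps[OF gamma_walk(1)[OF assms(2,3) y]] gamma_walk(2)[OF assms(2,3) y] by simp
  then show ?thesis
    using gamma_walk[OF assms(2,3) x] u assms(3) by (simp add: loop_of_path_def walk_def)
qed

definition step_weight :: "('e \<Rightarrow> 'k::ab_group_add) \<Rightarrow> 'e \<times> bool \<Rightarrow> 'k" where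
  "step_weight c s = (if snd s then c (fst s) else - c (fst s))"

definition walk_weight :: "('e \<Rightarrow> 'k::ab_group_add) \<Rightarrow> ('e \<times> bool) list \<Rightarrow> 'k" where
  "walk_weight c ss = sum_list (map (step_weight c) ss)"

lemma walk_weight_Nil [simp]: "walk_weight c [] = 0"
  by (simp add: walk_weight_def)

lemma walk_weight_Cons [simp]: "walk_weight c (s # ss) = step_weight c s + walk_weight c ss"
  by (simp add: walk_weight_def)

lemma walk_weight_append [simp]: "walk_weight c (s1 @ s2) = walk_weight c s1 + walk_weight c s2"
  by (simp add: walk_weight_def)

lemma walk_weight_inv_steps [simp]: "walk_weight c (inv_steps ss) = - walk_weight c ss"
  by (induction ss) (auto simp: step_weight_def)

lemma walk_weight_forward [simp]: "walk_weight c (map (\<lambda>a. (a, True)) as) = (\<Sum>a\<leftarrow>as. c a)"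
  by (simp add: walk_weight_def step_weight_def comp_def)

lemma htpy_walk_weight_eq:
  assumes "\<And>\<rho> u u'. minimal_rel V E src tgt scale e nuA \<rho> \<Longrightarrow> \<rho> u \<noteq> 0 \<Longrightarrow> \<rho> u' \<noteq> 0
      \<Longrightarrow> (\<Sum>a\<leftarrow>snd u. c a) = (\<Sum>a\<leftarrow>snd u'. c a)"
  shows "htpy V E src tgt scale e nuA w w' \<Longrightarrow> walk_weight c (snd w) = walk_weight c (snd w')"
proof (induction rule: htpy.induct)
  case (minrel \<rho> u u')
  then show ?case using assms[OF minrel.hyps] by (simp add: path_walk_def)
qed (simp_all add: step_weight_def)

lemma walk_weight_hom_pi1:
  fixes V :: "'v set" and c :: "'e \<Rightarrow> 'k::field"
  assumes invariant: "\<And>w w'. htpy V E src tgt scale e nuA w w' \<Longrightarrow> walk_weight c (snd w) = walk_weight c (snd w')"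
  obtains g where "g \<in> hom (pi1 V E src tgt scale e nuA x0) (additive_group TYPE('k))"
    and "\<And>w. walk V E src tgt w \<Longrightarrow> g (htpy_class V E src tgt scale e nuA w) = walk_weight c (snd w)"
proof
  let ?cl = "htpy_class V E src tgt scale e nuA"
  define g where "g X = walk_weight c (snd (SOME w. w \<in> X))" for X :: "('v \<times> ('e \<times> bool) list) set"
  have g_eq: "g X = r" if "w \<in> X" "\<And>w'. w' \<in> X \<Longrightarrow> walk_weight c (snd w') = r" for X w r
    using someI[of "\<lambda>w. w \<in> X", OF that(1)] that(2) unfolding g_def by blast
  show g_class: "g (?cl w) = walk_weight c (snd w)" if "walk V E src tgt w" for w
    by (rule g_eq[of w]) (use that invariant in \<open>auto simp: htpy_class_def intro: htpy.refl\<close>)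
  show "g \<in> hom (pi1 V E src tgt scale e nuA x0) (additive_group TYPE('k))"
  proof (rule homI)
    fix X Y assume "X \<in> carrier (pi1 V E src tgt scale e nuA x0)" "Y \<in> carrier (pi1 V E src tgt scale e nuA x0)"
    then obtain ss1 ss2 where X: "X = ?cl (x0, ss1)" "walk V E src tgt (x0, ss1)" "wend src tgt x0 ss1 = x0"
      and Y: "Y = ?cl (x0, ss2)" "walk V E src tgt (x0, ss2)"
      by (auto simp: pi1_def pi1_carrier_def)
    let ?P = "pi1_mult V E src tgt scale e nuA x0 X Y"
    have "walk V E src tgt (x0, ss1 @ ss2)"
      using X Y by (simp add: walk_def)
    then have "(x0, ss1 @ ss2) \<in> ?P"
      using X Y by (simp add: pi1_mult_def htpy_class_def) (blast intro: htpy.refl)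
    moreover have "walk_weight c (snd w) = walk_weight c ss1 + walk_weight c ss2" if "w \<in> ?P" for w
    proof -
      from that obtain s1 s2 where "htpy V E src tgt scale e nuA (x0, ss1) (x0, s1)"
        "htpy V E src tgt scale e nuA (x0, ss2) (x0, s2)" "htpy V E src tgt scale e nuA (x0, s1 @ s2) w"
        using X(1) Y(1) by (auto simp: pi1_mult_def htpy_class_def)
      from invariant[OF this(1)] invariant[OF this(2)] invariant[OF this(3)] show ?thesis by simp
    qed
    ultimately have "g ?P = walk_weight c ss1 + walk_weight c ss2"
      by (rule g_eq)
    then show "g (X \<otimes>\<^bsub>pi1 V E src tgt scale e nuA x0\<^esub> Y) = g X \<otimes>\<^bsub>additive_group TYPE('k)\<^esub> g Y"
      using X Y g_class by (simp add: pi1_def additive_group_def)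
  qed (simp add: additive_group_def)
qed

locale arrow_eigen_derivation = vector_space scale
  for scale :: "'k::field \<Rightarrow> 'a::ring_1 \<Rightarrow> 'a" +
  fixes V :: "'v set" and E :: "'e set" and src tgt :: "'e \<Rightarrow> 'v"
    and e :: "'v \<Rightarrow> 'a" and nuA :: "'e \<Rightarrow> 'a" and D :: "'a \<Rightarrow> 'a" and c :: "'e \<Rightarrow> 'k"
  assumes scale_mult_left: "scale r (p * q) = scale r p * q"
    and scale_mult_right: "scale r (p * q) = p * scale r q"
    and finite_vertices: "finite V"
    and idempotent: "i \<in> V \<Longrightarrow> e i * e i = e i"
    and orthogonal: "i \<in> V \<Longrightarrow> j \<in> V \<Longrightarrow> i \<noteq> j \<Longrightarrow> e i * e j = 0"
    and quiver: "quiver V E src tgt"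
    and arrow_idempotents: "\<alpha> \<in> E \<Longrightarrow> e (tgt \<alpha>) * nuA \<alpha> * e (src \<alpha>) = nuA \<alpha>"
    and derivation: "Der0 scale V e D"
    and arrow_eigen: "\<alpha> \<in> E \<Longrightarrow> D (nuA \<alpha>) = scale (c \<alpha>) (nuA \<alpha>)"
begin

lemma D_linear: "Vector_Spaces.linear scale scale D"
  using derivation by (simp add: Der0_def)

lemma D_add: "D (p + q) = D p + D q"
  using D_linear module_hom.add module_hom_iff_linear by metis

lemma D_scale: "D (scale r p) = scale r (D p)"
  using D_linear module_hom.scale module_hom_iff_linear by metis

lemma D_mult: "D (a * b) = D a * b + a * D b"
  using derivation by (simp add: Der0_def)

lemma D_idempotent: "i \<in> V \<Longrightarrow> D (e i) = 0"
  using derivation by (simp add: Der0_def)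

lemma idempotent_tgt_mult_arrow:
  assumes "a \<in> E"
  shows "e (tgt a) * nuA a = nuA a"
proof -
  have "tgt a \<in> V" using assms quiver by (simp add: quiver_def)
  then have "e (tgt a) * (e (tgt a) * nuA a * e (src a)) = e (tgt a) * nuA a * e (src a)"
    by (simp add: idempotent mult.assoc[symmetric])
  then show ?thesis using arrow_idempotents[OF assms] by simp
qed

lemma D_nu_path:
  assumes "x \<in> V" and "set as \<subseteq> E"
  shows "D (nu_path e nuA (x, as)) = scale (\<Sum>a\<leftarrow>as. c a) (nu_path e nuA (x, as))"
  using assms(2)
proof (induction as rule: rev_induct)
  case Nil
  then show ?case using D_idempotent assms(1) by simp
next
  case (snoc a as)
  let ?n = "nu_path e nuA (x, as)"
  have "D (nuA a * ?n) = scale (c a) (nuA a) * ?n + nuA a * scale (\<Sum>a\<leftarrow>as. c a) ?n"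
    using snoc by (simp add: D_mult arrow_eigen)
  also have "\<dots> = scale ((\<Sum>a\<leftarrow>as. c a) + c a) (nuA a * ?n)"
    by (simp add: scale_mult_left[symmetric] scale_mult_right[symmetric] scale_left_distrib)
  finally show ?case by (simp add: nu_path_snoc)
qed

lemma nu_path_mult_idempotent: "x \<in> V \<Longrightarrow> nu_path e nuA (x, as) * e x = nu_path e nuA (x, as)"
  by (induction as rule: rev_induct) (simp_all add: idempotent nu_path_snoc mult.assoc)

lemma idempotent_mult_nu_path:
  assumes "x \<in> V" and "set as \<subseteq> E"
  shows "e (wend src tgt x (map (\<lambda>a. (a, True)) as)) * nu_path e nuA (x, as) = nu_path e nuA (x, as)"
  using assms(2)
proof (induction as rule: rev_induct)
  case Nil
  then show ?case using idempotent assms(1) by simp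
next
  case (snoc a as)
  then show ?case
    by (simp add: send_def nu_path_snoc idempotent_tgt_mult_arrow mult.assoc[symmetric])
qed

lemma in_ker_weight_component:
  fixes \<mu> :: 'k
  assumes "in_ker V E src tgt scale e nuA \<rho>"
  defines "S \<equiv> {p. \<rho> p \<noteq> 0 \<and> (\<Sum>a\<leftarrow>snd p. c a) = \<mu>}"
  shows "in_ker V E src tgt scale e nuA (\<lambda>p. if p \<in> S then \<rho> p else 0)"
proof -
  define F where "F = {p. \<rho> p \<noteq> 0}"
  define v where "v p = scale (\<rho> p) (nu_path e nuA p)" for p
  have fin: "finite F" and paths: "\<And>p. p \<in> F \<Longrightarrow> is_path V E src tgt p" and sum_F: "sum v F = 0"
    using assms(1) by (auto simp: in_ker_def kQ_elem_def nu_lin_def F_def v_def)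
  have eigen: "D (v p) = scale (\<Sum>a\<leftarrow>snd p. c a) (v p)" if "p \<in> F" for p
  proof -
    have "fst p \<in> V" and "set (snd p) \<subseteq> E"
      using is_path_vertex_arrows[OF paths[OF that]] by auto
    from D_nu_path[OF this] show ?thesis
      by (simp add: v_def D_scale scale_left_commute)
  qed
  have S_eq: "{p\<in>F. (\<Sum>a\<leftarrow>snd p. c a) = \<mu>} = S" and S_F: "S \<subseteq> F"
    by (auto simp: F_def S_def)
  from sum_eigencomponent_eq_0[OF vector_space_axioms D_linear fin eigen sum_F, of \<mu>]
  have "sum v S = 0" unfolding S_eq .
  moreover have "(\<Sum>p\<in>S. scale (if p \<in> S then \<rho> p else 0) (nu_path e nuA p)) = sum v S"
    by (rule sum.cong) (auto simp: v_def)
  moreover have "{p. (if p \<in> S then \<rho> p else 0) \<noteq> 0} = S"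
    by (auto simp: S_def)
  moreover have "finite S" using finite_subset[OF S_F fin] .
  ultimately show ?thesis
    using paths S_F unfolding in_ker_def kQ_elem_def nu_lin_def by auto
qed

lemma minimal_rel_weight_eq:
  assumes "minimal_rel V E src tgt scale e nuA \<rho>" and "\<rho> u \<noteq> 0" and "\<rho> u' \<noteq> 0"
  shows "(\<Sum>a\<leftarrow>snd u. c a) = (\<Sum>a\<leftarrow>snd u'. c a)"
proof -
  define S where "S = {p. \<rho> p \<noteq> 0 \<and> (\<Sum>a\<leftarrow>snd p. c a) = (\<Sum>a\<leftarrow>snd u. c a)}"
  have "in_ker V E src tgt scale e nuA (\<lambda>p. if p \<in> S then \<rho> p else 0)"
    using assms(1) in_ker_weight_component unfolding minimal_rel_def S_def by blast
  moreover have "u \<in> S" using assms(2) by (simp add: S_def)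
  ultimately have "\<not> S \<subset> {p. \<rho> p \<noteq> 0}"
    using assms(1) unfolding minimal_rel_def by blast
  then have "u' \<in> S" using assms(3) by (auto simp: S_def)
  then show ?thesis by (simp add: S_def)
qed

lemma htpy_walk_weight_invariant:
  "htpy V E src tgt scale e nuA w w' \<Longrightarrow> walk_weight c (snd w) = walk_weight c (snd w')"
  by (rule htpy_walk_weight_eq[OF minimal_rel_weight_eq])

lemma sum_scaled_idempotents_mult:
  assumes "i \<in> V"
  shows "(\<Sum>j\<in>V. scale (h j) (e j)) * (e i * p) = scale (h i) (e i * p)"
proof -
  have "(\<Sum>j\<in>V. scale (h j) (e j)) * (e i * p) = (\<Sum>j\<in>V. scale (h j) (e j * e i * p))"
    by (simp add: sum_distrib_right scale_mult_left mult.assoc)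
  also have "\<dots> = (\<Sum>j\<in>V. if j = i then scale (h i) (e i * p) else 0)"
    using assms by (intro sum.cong) (auto simp: idempotent orthogonal)
  finally show ?thesis using assms finite_vertices by simp
qed

lemma mult_sum_scaled_idempotents:
  assumes "i \<in> V"
  shows "(p * e i) * (\<Sum>j\<in>V. scale (h j) (e j)) = scale (h i) (p * e i)"
proof -
  have "(p * e i) * (\<Sum>j\<in>V. scale (h j) (e j)) = (\<Sum>j\<in>V. scale (h j) (p * (e i * e j)))"
    by (simp add: sum_distrib_left scale_mult_right mult.assoc)
  also have "\<dots> = (\<Sum>j\<in>V. if j = i then scale (h i) (p * e i) else 0)"
    using assms by (intro sum.cong) (auto simp: idempotent orthogonal)
  finally show ?thesis using assms finite_vertices by simp
qed

lemma Der0_diff_commutator: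
  fixes h :: "'v \<Rightarrow> 'k"
  defines "z \<equiv> \<Sum>j\<in>V. scale (h j) (e j)"
  shows "Der0 scale V e (\<lambda>p. D p - (z * p - p * z))"
proof -
  have "D (p + q) - (z * (p + q) - (p + q) * z) = D p - (z * p - p * z) + (D q - (z * q - q * z))"
    for p q by (simp add: D_add algebra_simps)
  moreover have "D (scale r p) - (z * scale r p - scale r p * z) = scale r (D p - (z * p - p * z))"
    for r p by (simp add: D_scale scale_mult_left[symmetric] scale_mult_right[symmetric] scale_right_diff_distrib)
  moreover have "D (p * q) - (z * (p * q) - p * q * z) = (D p - (z * p - p * z)) * q + p * (D q - (z * q - q * z))"
    for p q by (simp add: D_mult algebra_simps)
  moreover have "D (e i) - (z * e i - e i * z) = 0" if "i \<in> V" for i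
    using that sum_scaled_idempotents_mult[of i h 1] mult_sum_scaled_idempotents[of i 1 h]
    by (simp add: z_def D_idempotent)
  moreover have "module scale"
    using vector_space_axioms by (simp add: module_iff_vector_space)
  ultimately show ?thesis
    unfolding Der0_def module_hom_iff_linear[symmetric] module_hom_iff by simp
qed

lemma diff_commutator_nu_path:
  fixes h :: "'v \<Rightarrow> 'k"
  assumes "is_path V E src tgt (x, as)"
  defines "z \<equiv> \<Sum>j\<in>V. scale (h j) (e j)" and "y \<equiv> wend src tgt x (map (\<lambda>a. (a, True)) as)"
  shows "D (nu_path e nuA (x, as)) - (z * nu_path e nuA (x, as) - nu_path e nuA (x, as) * z) =
    scale (h x + (\<Sum>a\<leftarrow>as. c a) - h y) (nu_path e nuA (x, as))"
proof -
  have x: "x \<in> V" and as: "set as \<subseteq> E" and y: "y \<in> V"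
    using is_path_vertex_arrows[OF assms(1)] wend_in_vertices[OF quiver] assms(1)
    by (auto simp: y_def is_path_def walk_def path_walk_def)
  have "z * nu_path e nuA (x, as) = scale (h y) (nu_path e nuA (x, as))"
    using sum_scaled_idempotents_mult[OF y, of h "nu_path e nuA (x, as)"] idempotent_mult_nu_path[OF x as]
    by (simp add: z_def y_def)
  moreover have "nu_path e nuA (x, as) * z = scale (h x) (nu_path e nuA (x, as))"
    using mult_sum_scaled_idempotents[OF x, of "nu_path e nuA (x, as)" h] nu_path_mult_idempotent[OF x]
    by (simp add: z_def)
  ultimately show ?thesis
    using D_nu_path[OF x as] by (simp add: scale_left_distrib scale_left_diff_distrib)
qed

lemma derivation_in_image_theta:
  assumes tree: "maximal_tree V E src tgt T" and x0: "x0 \<in> V"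
  shows "in_image_theta V E src tgt scale e nuA T x0 D"
proof -
  obtain g where g_hom: "g \<in> hom (pi1 V E src tgt scale e nuA x0) (additive_group TYPE('k))"
    and g_class: "\<And>w. walk V E src tgt w \<Longrightarrow> g (htpy_class V E src tgt scale e nuA w) = walk_weight c (snd w)"
    using walk_weight_hom_pi1[OF htpy_walk_weight_invariant] by blast
  define h where "h x = walk_weight c (gamma src tgt T x0 x)" for x
  define z where "z = (\<Sum>x\<in>V. scale (h x) (e x))"
  have theta: "D (nu_path e nuA (x, as)) - (z * nu_path e nuA (x, as) - nu_path e nuA (x, as) * z) =
      scale (g (htpy_class V E src tgt scale e nuA (loop_of_path src tgt T x0 (x, as)))) (nu_path e nuA (x, as))"
    if u: "is_path V E src tgt (x, as)" for x as
    using diff_commutator_nu_path[OF u, of h] g_class[OF walk_loop_of_path[OF quiver tree x0 u]]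
    by (simp add: z_def h_def loop_of_path_def path_walk_def)
  show ?thesis
    unfolding in_image_theta_def
  proof (intro bexI[OF _ g_hom] exI conjI)
    show "Der0 scale V e (\<lambda>p. D p - (z * p - p * z))"
      unfolding z_def by (rule Der0_diff_commutator)
    show "same_HH1_class scale V e D (\<lambda>p. D p - (z * p - p * z))"
      unfolding same_HH1_class_def z_def by (intro exI[of _ h]) simp
  qed (use theta in auto)
qed

end

theorem lemma2p5:
  fixes scale :: "'k::field \<Rightarrow> 'a::ring_1 \<Rightarrow> 'a"
    and V :: "'v set" and E :: "'e set" and src tgt :: "'e \<Rightarrow> 'v"
    and e :: "'v \<Rightarrow> 'a" and nuA :: "'e \<Rightarrow> 'a"
    and B :: "'a set" and D :: "'a \<Rightarrow> 'a" and T :: "'e set" and x0 :: 'v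
  assumes "alg_closed_field TYPE('k)"
    and "finite_dim_algebra scale"
    and "connected_algebra TYPE('a)"
    and "complete_prim_orth_idems V e"
    and "quiver V E src tgt"
    and "no_oriented_cycles V E src tgt"
    and "presentation V E src tgt scale e nuA"
    and "paper_basis scale V e B"
    and "\<forall>a\<in>E. nuA a \<in> B"
    and "Der0 scale V e D"
    and "diagonal_wrt scale B D"
    and "maximal_tree V E src tgt T"
    and "x0 \<in> V"
  shows "in_image_theta V E src tgt scale e nuA T x0 D"
proof -
  have "\<forall>a\<in>E. \<exists>r. D (nuA a) = scale r (nuA a)"
    using assms(9,11) by (auto simp: diagonal_wrt_def)
  from bchoice[OF this] obtain c where c: "\<forall>a\<in>E. D (nuA a) = scale (c a) (nuA a)"
    by blast
  have "vector_space scale" and "\<And>r p q. scale r (p * q) = scale r p * q"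
    and "\<And>r p q. scale r (p * q) = p * scale r q"
    using assms(2) unfolding finite_dim_algebra_def k_algebra_def by blast+
  then interpret arrow_eigen_derivation scale V E src tgt e nuA D c
    using assms(4,5,7,10) c
    by (intro arrow_eigen_derivation.intro arrow_eigen_derivation_axioms.intro)
      (auto simp: complete_prim_orth_idems_def primitive_idem_def presentation_def)
  show ?thesis
    using assms(12,13) by (rule derivation_in_image_theta)
qed

end
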